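(* Let $n$ and $x$ be integers with $4 \leq x \leq n-3$ and such that $(n-4)x$ is even. Let $d$ be the sequence of length $n$ $$d = (n-1,\, n-1,\, \underbrace{x, \ldots, x}_{n-4},\, 2,\, 2).$$ Then $d$ is a $2$-factorable graphic sequence, and no realization of $d$ has a connected $2$-factor.
   Context: A finite sequence of nonnegative integers $d = (d_1, \ldots, d_n)$ is graphic if there is a simple graph on vertices $v_1, \ldots, v_n$ with $\deg(v_i) = d_i$ for all $i$; such a graph is a realization of $d$. A $k$-factor of a graph $G$ is a spanning subgraph of $G$ in which every vertex has degree $k$. A graphic sequence $d$ is $k$-factorable if some realization of $d$ contains a $k$-factor. A connected $k$-factor is a $k$-factor that is a connected graph. *)

theory Defs
  imports Main
begin

definition simple_graph :: "nat \<Rightarrow> (nat \<Rightarrow> nat \<Rightarrow> bool) \<Rightarrow> bool" where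
  "simple_graph n E \<longleftrightarrow>
     (\<forall>u v. E u v \<longrightarrow> u < n \<and> v < n) \<and>
     (\<forall>u v. E u v \<longrightarrow> E v u) \<and>
     (\<forall>v. \<not> E v v)"

definition degree :: "nat \<Rightarrow> (nat \<Rightarrow> nat \<Rightarrow> bool) \<Rightarrow> nat \<Rightarrow> nat" where
  "degree n E v = card {u. u < n \<and> E v u}"

definition realization :: "nat \<Rightarrow> (nat \<Rightarrow> nat) \<Rightarrow> (nat \<Rightarrow> nat \<Rightarrow> bool) \<Rightarrow> bool" where
  "realization n d E \<longleftrightarrow> simple_graph n E \<and> (\<forall>v<n. degree n E v = d v)"

definition graphic :: "nat \<Rightarrow> (nat \<Rightarrow> nat) \<Rightarrow> bool" where
  "graphic n d \<longleftrightarrow> (\<exists>E. realization n d E)"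

definition k_factor :: "nat \<Rightarrow> nat \<Rightarrow> (nat \<Rightarrow> nat \<Rightarrow> bool) \<Rightarrow> (nat \<Rightarrow> nat \<Rightarrow> bool) \<Rightarrow> bool" where
  "k_factor n k E F \<longleftrightarrow> simple_graph n F \<and> (\<forall>u v. F u v \<longrightarrow> E u v) \<and>
     (\<forall>v<n. degree n F v = k)"

definition k_factorable :: "nat \<Rightarrow> nat \<Rightarrow> (nat \<Rightarrow> nat) \<Rightarrow> bool" where
  "k_factorable n k d \<longleftrightarrow> (\<exists>E. realization n d E \<and> (\<exists>F. k_factor n k E F))"

definition connected_graph :: "nat \<Rightarrow> (nat \<Rightarrow> nat \<Rightarrow> bool) \<Rightarrow> bool" where
  "connected_graph n F \<longleftrightarrow> (\<forall>u<n. \<forall>v<n. F\<^sup>*\<^sup>* u v)"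

definition seq_d :: "nat \<Rightarrow> nat \<Rightarrow> nat \<Rightarrow> nat" where
  "seq_d n x i = (if i < 2 then n - 1 else if i < n - 2 then x else 2)"

end

theory Submission
  imports Defs "HOL-Number_Theory.Cong"
begin

(* In any realization the two vertices of degree n - 1 are adjacent to every other vertex, so the
   two vertices of degree 2 are adjacent to these two and nothing else. A 2-factor must use both
   edges at each degree-2 vertex, and then both of its edges at each vertex of degree n - 1; these
   four vertices thus form a component of the 2-factor, which is therefore disconnected.
   For existence, put an (x - 2)-regular circulant (Harary) graph on the n - 4 middle vertices and
   join the two vertices of degree n - 1 to everything; the 4-cycle through the four special
   vertices together with the Hamiltonian cycle of the circulant is a 2-factor. *)

section \<open>Circulant graphs\<close>

definition connection_set :: "nat \<Rightarrow> nat set \<Rightarrow> bool" where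
  "connection_set m D \<longleftrightarrow> D \<subseteq> {1..<m} \<and> (\<forall>d\<in>D. m - d \<in> D)"

definition circulant :: "nat \<Rightarrow> nat \<Rightarrow> nat set \<Rightarrow> nat \<Rightarrow> nat \<Rightarrow> bool" where
  "circulant a m D u v \<longleftrightarrow> a \<le> u \<and> u < a + m \<and> (\<exists>d\<in>D. v = a + (u - a + d) mod m)"

lemma circulant_mono: "D \<subseteq> D' \<Longrightarrow> circulant a m D u v \<Longrightarrow> circulant a m D' u v"
  unfolding circulant_def by blast

lemma circulant_range:
  assumes "circulant a m D u v"
  shows "a \<le> u" "u < a + m" "a \<le> v" "v < a + m"
  using assms unfolding circulant_def by auto

lemma circulant_sym:
  assumes "connection_set m D" "circulant a m D u v"
  shows "circulant a m D v u"
proof -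
  obtain d where d: "d \<in> D" and v: "v = a + (u - a + d) mod m" and u: "a \<le> u" "u < a + m"
    using assms(2) unfolding circulant_def by blast
  have "d < m" "m - d \<in> D"
    using assms(1) d unfolding connection_set_def by auto
  have "(v - a + (m - d)) mod m = (u - a + d + (m - d)) mod m"
    using v by (simp add: mod_add_left_eq)
  also have "\<dots> = (u - a + m) mod m"
    using \<open>d < m\<close> by (simp add: algebra_simps)
  also have "\<dots> = u - a"
    using u by (metis mod_add_self2 mod_less less_diff_conv2 add.commute)
  finally show ?thesis
    using \<open>m - d \<in> D\<close> u v unfolding circulant_def by (auto intro!: bexI[of _ "m - d"])
qed

lemma circulant_irrefl:
  assumes "connection_set m D"
  shows "\<not> circulant a m D u u"
proof
  assume "circulant a m D u u"
  then obtain d where d: "d \<in> D" and "u = a + (u - a + d) mod m"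
    unfolding circulant_def by blast
  then have "[u - a + d = u - a] (mod m)"
    unfolding cong_def by (metis add_diff_cancel_left' mod_mod_trivial)
  then have "[d = 0] (mod m)"
    by (simp add: cong_add_lcancel_0_nat)
  moreover have "0 < d" "d < m"
    using assms d unfolding connection_set_def by auto
  ultimately show False
    by (auto simp: cong_0_iff dest: nat_dvd_not_less)
qed

lemma simple_graph_circulant:
  assumes "connection_set m D" "a + m \<le> n"
  shows "simple_graph n (circulant a m D)"
proof -
  have "u < n \<and> v < n" if "circulant a m D u v" for u v
    using circulant_range[OF that] assms(2) by linarith
  then show ?thesis
    using circulant_sym[OF assms(1)] circulant_irrefl[OF assms(1)]
    unfolding simple_graph_def by blast
qed

lemma degree_circulant:
  assumes "connection_set m D" "a + m \<le> n" "a \<le> u" "u < a + m"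
  shows "degree n (circulant a m D) u = card D"
proof -
  let ?f = "\<lambda>d. a + (u - a + d) mod m"
  have "0 < m"
    using assms(3,4) by linarith
  then have "?f d < n" for d
    using mod_less_divisor[of m "u - a + d"] assms(2) by linarith
  moreover have "circulant a m D u v \<longleftrightarrow> v \<in> ?f ` D" for v
    using assms(3,4) unfolding circulant_def by blast
  ultimately have "{v. v < n \<and> circulant a m D u v} = ?f ` D"
    by blast
  moreover have "inj_on ?f D"
  proof
    fix d d' assume "d \<in> D" "d' \<in> D" "?f d = ?f d'"
    then have "[u - a + d = u - a + d'] (mod m)" and "d < m" "d' < m"
      using assms(1) unfolding cong_def connection_set_def by auto
    then show "d = d'"
      by (simp add: cong_add_lcancel_nat cong_less_modulus_unique_nat)
  qed
  ultimately show ?thesis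
    unfolding degree_def by (simp add: card_image)
qed

definition harary_connections :: "nat \<Rightarrow> nat \<Rightarrow> nat set" where
  "harary_connections m k =
     {1..k div 2} \<union> {m - k div 2..m - 1} \<union> (if odd k then {m div 2} else {})"

lemma connection_set_harary:
  assumes "k < m" "even (m * k)"
  shows "connection_set m (harary_connections m k)"
  unfolding connection_set_def
proof
  have "k div 2 < m"
    using assms(1) by linarith
  moreover have "odd k \<Longrightarrow> 1 \<le> m div 2 \<and> m div 2 < m"
    using assms by auto
  ultimately show "harary_connections m k \<subseteq> {1..<m}"
    unfolding harary_connections_def by auto
  show "\<forall>d\<in>harary_connections m k. m - d \<in> harary_connections m k"
  proof
    fix d
    assume "d \<in> harary_connections m k"
    then consider "1 \<le> d" "d \<le> k div 2" | "m - k div 2 \<le> d" "d \<le> m - 1" | "odd k" "d = m div 2"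
      unfolding harary_connections_def by (auto split: if_splits)
    then show "m - d \<in> harary_connections m k"
    proof cases
      case 1
      then have "m - d \<in> {m - k div 2..m - 1}"
        using \<open>k div 2 < m\<close> by auto
      then show ?thesis
        unfolding harary_connections_def by blast
    next
      case 2
      then have "m - d \<in> {1..k div 2}"
        using \<open>k div 2 < m\<close> by auto
      then show ?thesis
        unfolding harary_connections_def by blast
    next
      case 3
      then have "m - d = m div 2"
        using assms(2) by auto
      then show ?thesis
        using 3 unfolding harary_connections_def by auto
    qed
  qed
qed

lemma card_harary_connections:
  assumes "k < m" "even (m * k)"
  shows "card (harary_connections m k) = k"
proof -
  have "{1..k div 2} \<inter> {m - k div 2..m - 1} = {}"
    using assms(1) by auto
  then have card_intervals: "card ({1..k div 2} \<union> {m - k div 2..m - 1}) = 2 * (k div 2)"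
    using assms(1) by (simp add: card_Un_disjoint)
  show ?thesis
  proof (cases "even k")
    case True
    then show ?thesis
      using card_intervals unfolding harary_connections_def by simp
  next
    case False
    then have "even m" "k div 2 < m div 2"
      using assms by auto
    then have "m div 2 \<notin> {1..k div 2} \<union> {m - k div 2..m - 1}"
      by auto
    then show ?thesis
      using False card_intervals unfolding harary_connections_def by simp
  qed
qed

lemma harary_connections_two_subset:
  "2 \<le> k \<Longrightarrow> harary_connections m 2 \<subseteq> harary_connections m k"
  unfolding harary_connections_def by auto

section \<open>Two universal vertices over a regular middle\<close>

definition hub_graph :: "nat \<Rightarrow> (nat \<Rightarrow> nat \<Rightarrow> bool) \<Rightarrow> nat \<Rightarrow> nat \<Rightarrow> bool" where
  "hub_graph n G u v \<longleftrightarrow> u < n \<and> v < n \<and> u \<noteq> v \<and> (u < 2 \<or> v < 2 \<or> G u v)"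

definition hub_factor :: "nat \<Rightarrow> (nat \<Rightarrow> nat \<Rightarrow> bool) \<Rightarrow> nat \<Rightarrow> nat \<Rightarrow> bool" where
  "hub_factor n C u v \<longleftrightarrow> u < n \<and> v < n \<and>
     (u < 2 \<and> n - 2 \<le> v \<or> v < 2 \<and> n - 2 \<le> u \<or> C u v)"

lemma degree_hub_graph:
  assumes G: "simple_graph n G"
    and inner: "\<And>u v. G u v \<Longrightarrow> 2 \<le> u \<and> u < n - 2"
    and regular: "\<And>v. 2 \<le> v \<Longrightarrow> v < n - 2 \<Longrightarrow> degree n G v = k"
    and "v < n"
  shows "degree n (hub_graph n G) v = seq_d n (k + 2) v"
proof -
  have G_sym: "G u w \<Longrightarrow> G w u" and G_irrefl: "\<not> G w w" for u w
    using G unfolding simple_graph_def by blast+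
  consider "v < 2" | "2 \<le> v" "v < n - 2" | "2 \<le> v" "n - 2 \<le> v"
    by linarith
  then show ?thesis
  proof cases
    case 1
    then have "{u. u < n \<and> hub_graph n G v u} = {..<n} - {v}"
      using \<open>v < n\<close> unfolding hub_graph_def by auto
    then show ?thesis
      using 1 \<open>v < n\<close> unfolding degree_def seq_d_def by simp
  next
    case 2
    have "{u. u < n \<and> hub_graph n G v u} = {0, 1} \<union> {u. u < n \<and> G v u}"
      using 2 \<open>v < n\<close> G_irrefl unfolding hub_graph_def by auto
    moreover have "{0, 1} \<inter> {u. u < n \<and> G v u} = {}"
      using inner G_sym by fastforce
    ultimately have "degree n (hub_graph n G) v = 2 + degree n G v"
      unfolding degree_def by (simp add: card_Un_disjoint)
    then show ?thesis
      using 2 regular unfolding seq_d_def by simp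
  next
    case 3
    have "\<not> G v u" for u
      using 3 inner by fastforce
    then have "{u. u < n \<and> hub_graph n G v u} = {0, 1}"
      using 3 \<open>v < n\<close> G_sym unfolding hub_graph_def by auto
    then show ?thesis
      using 3 unfolding degree_def seq_d_def by simp
  qed
qed

lemma realization_hub_graph:
  assumes G: "simple_graph n G"
    and inner: "\<And>u v. G u v \<Longrightarrow> 2 \<le> u \<and> u < n - 2"
    and regular: "\<And>v. 2 \<le> v \<Longrightarrow> v < n - 2 \<Longrightarrow> degree n G v = k"
  shows "realization n (seq_d n (k + 2)) (hub_graph n G)"
proof -
  have "simple_graph n (hub_graph n G)"
    using G unfolding simple_graph_def hub_graph_def by blast
  moreover have "degree n (hub_graph n G) v = seq_d n (k + 2) v" if "v < n" for v
    using G inner regular that by (rule degree_hub_graph)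
  ultimately show ?thesis
    unfolding realization_def by blast
qed

lemma degree_hub_factor:
  assumes "4 \<le> n" and C: "simple_graph n C"
    and inner: "\<And>u v. C u v \<Longrightarrow> 2 \<le> u \<and> u < n - 2"
    and two_regular: "\<And>v. 2 \<le> v \<Longrightarrow> v < n - 2 \<Longrightarrow> degree n C v = 2"
    and "v < n"
  shows "degree n (hub_factor n C) v = 2"
proof -
  have C_sym: "C u w \<Longrightarrow> C w u" for u w
    using C unfolding simple_graph_def by blast
  consider "v < 2" | "2 \<le> v" "v < n - 2" | "n - 2 \<le> v"
    by linarith
  then show ?thesis
  proof cases
    case 1
    have "\<not> C v u" for u
      using 1 inner by fastforce
    then have "{u. u < n \<and> hub_factor n C v u} = {n - 2, n - 1}"
      using 1 \<open>4 \<le> n\<close> unfolding hub_factor_def by auto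
    then show ?thesis
      using \<open>4 \<le> n\<close> unfolding degree_def by simp
  next
    case 2
    then have "{u. u < n \<and> hub_factor n C v u} = {u. u < n \<and> C v u}"
      using \<open>v < n\<close> unfolding hub_factor_def by auto
    then show ?thesis
      using 2 two_regular unfolding degree_def by simp
  next
    case 3
    have "\<not> C v u" for u
      using 3 inner by fastforce
    then have "{u. u < n \<and> hub_factor n C v u} = {0, 1}"
      using 3 \<open>v < n\<close> \<open>4 \<le> n\<close> C_sym unfolding hub_factor_def by auto
    then show ?thesis
      unfolding degree_def by simp
  qed
qed

lemma k_factor_hub_factor:
  assumes "4 \<le> n" and C: "simple_graph n C"
    and inner: "\<And>u v. C u v \<Longrightarrow> 2 \<le> u \<and> u < n - 2"
    and two_regular: "\<And>v. 2 \<le> v \<Longrightarrow> v < n - 2 \<Longrightarrow> degree n C v = 2"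
    and subgraph: "\<And>u v. C u v \<Longrightarrow> G u v"
  shows "k_factor n 2 (hub_graph n G) (hub_factor n C)"
proof -
  have C_sym: "C u v \<Longrightarrow> C v u" and C_irrefl: "\<not> C v v" for u v
    using C unfolding simple_graph_def by blast+
  have "simple_graph n (hub_factor n C)"
    using C_sym C_irrefl \<open>4 \<le> n\<close> unfolding simple_graph_def hub_factor_def by auto
  moreover have "hub_factor n C u v \<Longrightarrow> hub_graph n G u v" for u v
    using C_irrefl subgraph \<open>4 \<le> n\<close> unfolding hub_factor_def hub_graph_def by auto
  moreover have "degree n (hub_factor n C) v = 2" if "v < n" for v
    using \<open>4 \<le> n\<close> C inner two_regular that by (rule degree_hub_factor)
  ultimately show ?thesis
    unfolding k_factor_def by blast
qed

lemma circulant_inner: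
  "m + 4 = n \<Longrightarrow> circulant 2 m D u v \<Longrightarrow> 2 \<le> u \<and> u < n - 2"
  using circulant_range(1,2) by fastforce

lemma realization_hub_circulant:
  assumes "m + 4 = n" "connection_set m D"
  shows "realization n (seq_d n (card D + 2)) (hub_graph n (circulant 2 m D))"
proof (rule realization_hub_graph)
  show "simple_graph n (circulant 2 m D)"
    using assms(2) by (rule simple_graph_circulant) (use assms(1) in linarith)
  show "degree n (circulant 2 m D) v = card D" if "2 \<le> v" "v < n - 2" for v
    using assms that by (intro degree_circulant) auto
qed (use assms(1) circulant_inner in blast)

lemma k_factor_hub_circulant:
  assumes "m + 4 = n" "connection_set m D'" "card D' = 2" "D' \<subseteq> D"
  shows "k_factor n 2 (hub_graph n (circulant 2 m D)) (hub_factor n (circulant 2 m D'))"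
proof (rule k_factor_hub_factor)
  show "simple_graph n (circulant 2 m D')"
    using assms(2) by (rule simple_graph_circulant) (use assms(1) in linarith)
  show "degree n (circulant 2 m D') v = 2" if "2 \<le> v" "v < n - 2" for v
    using assms(1-3) that by (subst degree_circulant) auto
qed (use assms circulant_inner circulant_mono in auto)

lemma two_factorable_seq_d:
  assumes "4 \<le> x" "x + 3 \<le> n" "even ((n - 4) * x)"
  shows "k_factorable n 2 (seq_d n x)"
proof -
  define m k where "m = n - 4" and "k = x - 2"
  have n: "m + 4 = n" and x: "x = k + 2"
    using assms(1,2) unfolding m_def k_def by auto
  then have "m * x = m * k + 2 * m"
    by (simp add: algebra_simps)
  then have "even (m * k)"
    using assms(3) unfolding m_def[symmetric] by simp
  moreover have "k < m" "2 < m" "2 \<le> k"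
    using assms(1,2) unfolding m_def k_def by auto
  ultimately have D: "connection_set m (harary_connections m k)"
    "card (harary_connections m k) = k"
    and C: "connection_set m (harary_connections m 2)" "card (harary_connections m 2) = 2"
    by (simp_all add: connection_set_harary card_harary_connections)
  have "realization n (seq_d n x) (hub_graph n (circulant 2 m (harary_connections m k)))"
    using realization_hub_circulant[OF n D(1)] unfolding D(2) x .
  moreover have "k_factor n 2 (hub_graph n (circulant 2 m (harary_connections m k)))
      (hub_factor n (circulant 2 m (harary_connections m 2)))"
    using k_factor_hub_circulant[OF n C harary_connections_two_subset[OF \<open>2 \<le> k\<close>]] .
  ultimately show ?thesis
    unfolding k_factorable_def by blast
qed

section \<open>No connected 2-factor\<close>

lemma neighbours_eq_of_degree_le:
  assumes "A \<subseteq> {u. u < n \<and> E v u}" "degree n E v \<le> card A"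
  shows "{u. u < n \<and> E v u} = A"
  using assms unfolding degree_def by (intro card_seteq[symmetric]) auto

lemma adjacent_of_degree_eq:
  assumes "simple_graph n E" "v < n" "degree n E v = n - 1" "u < n" "u \<noteq> v"
  shows "E v u"
proof -
  have "{w. w < n \<and> E v w} \<subseteq> {..<n} - {v}"
    using assms(1) unfolding simple_graph_def by auto
  moreover have "card ({..<n} - {v}) \<le> degree n E v"
    using assms(2,3) by simp
  ultimately have "{w. w < n \<and> E v w} = {..<n} - {v}"
    unfolding degree_def by (intro card_seteq) auto
  then show ?thesis
    using assms(4,5) by blast
qed

lemma not_connected_of_closed:
  assumes closed: "\<And>u v. u \<in> S \<Longrightarrow> F u v \<Longrightarrow> v \<in> S"
    and "a \<in> S" "a < n" "b < n" "b \<notin> S"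
  shows "\<not> connected_graph n F"
proof
  assume "connected_graph n F"
  then have "F\<^sup>*\<^sup>* a b"
    using assms(3,4) unfolding connected_graph_def by blast
  then have "b \<in> S"
    by (induction rule: rtranclp_induct) (use \<open>a \<in> S\<close> closed in blast)+
  with \<open>b \<notin> S\<close> show False ..
qed

lemma neighbours_of_degree_two_seq_d:
  assumes "5 \<le> n" and E: "realization n (seq_d n x) E" and "n - 2 \<le> w" "w < n"
  shows "{u. u < n \<and> E w u} = {0, 1}"
proof (rule neighbours_eq_of_degree_le[of _ n E w])
  have E_deg: "v < n \<Longrightarrow> degree n E v = seq_d n x v" for v
    using E unfolding realization_def by blast
  have "E h w" if "h < 2" for h
  proof (rule adjacent_of_degree_eq)
    show "simple_graph n E"
      using E unfolding realization_def by blast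
    show "degree n E h = n - 1"
      using E_deg[of h] that \<open>5 \<le> n\<close> unfolding seq_d_def by simp
  qed (use that assms in auto)
  then show "{0, 1} \<subseteq> {u. u < n \<and> E w u}"
    using E \<open>5 \<le> n\<close> unfolding realization_def simple_graph_def by auto
  show "degree n E w \<le> card {0::nat, 1}"
    using E_deg[of w] assms unfolding seq_d_def by simp
qed

lemma two_factor_neighbours_seq_d:
  assumes "5 \<le> n" and E: "realization n (seq_d n x) E" and F: "k_factor n 2 E F"
  shows "n - 2 \<le> w \<Longrightarrow> w < n \<Longrightarrow> {u. u < n \<and> F w u} = {0, 1}"
    and "h < 2 \<Longrightarrow> {u. u < n \<and> F h u} = {n - 2, n - 1}"
proof -
  have F_sym: "F u v \<Longrightarrow> F v u" and F_sub: "F u v \<Longrightarrow> E u v"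
    and F_deg: "v < n \<Longrightarrow> degree n F v = 2" for u v
    using F unfolding k_factor_def simple_graph_def by blast+
  show leaf: "{u. u < n \<and> F w u} = {0, 1}" if "n - 2 \<le> w" "w < n" for w
  proof (rule card_seteq)
    show "{u. u < n \<and> F w u} \<subseteq> {0, 1}"
      using neighbours_of_degree_two_seq_d[OF \<open>5 \<le> n\<close> E that] F_sub by blast
    show "card {0::nat, 1} \<le> card {u. u < n \<and> F w u}"
      using F_deg[of w] that unfolding degree_def by simp
  qed simp
  show "{u. u < n \<and> F h u} = {n - 2, n - 1}" if "h < 2"
  proof (rule neighbours_eq_of_degree_le[of _ n F h])
    have "h \<in> {0, 1}"
      using that by auto
    then have "F h w" if "n - 2 \<le> w" "w < n" for w
      using leaf[OF that] F_sym by blast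
    then show "{n - 2, n - 1} \<subseteq> {u. u < n \<and> F h u}"
      using \<open>5 \<le> n\<close> by simp
    have "card {n - 2, n - 1} = 2"
      using \<open>5 \<le> n\<close> by simp
    then show "degree n F h \<le> card {n - 2, n - 1}"
      using F_deg[of h] that \<open>5 \<le> n\<close> by simp
  qed
qed

lemma no_connected_two_factor:
  assumes "5 \<le> n" and E: "realization n (seq_d n x) E" and F: "k_factor n 2 E F"
  shows "\<not> connected_graph n F"
proof (rule not_connected_of_closed)
  let ?S = "{0, 1, n - 2, n - 1}"
  show "v \<in> ?S" if "u \<in> ?S" "F u v" for u v
  proof -
    have "v \<in> {w. w < n \<and> F u w}"
      using \<open>F u v\<close> F unfolding k_factor_def simple_graph_def by blast
    moreover have "u < 2 \<or> n - 2 \<le> u \<and> u < n"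
      using \<open>u \<in> ?S\<close> \<open>5 \<le> n\<close> by auto
    ultimately show ?thesis
      using two_factor_neighbours_seq_d[OF assms] by blast
  qed
  show "0 \<in> ?S" "0 < n" "2 < n" "2 \<notin> ?S"
    using \<open>5 \<le> n\<close> by auto
qed

theorem mainTheorem1:
  fixes n x :: nat
  assumes "4 \<le> x" and "x + 3 \<le> n" and "even ((n - 4) * x)"
  shows "graphic n (seq_d n x) \<and> k_factorable n 2 (seq_d n x) \<and>
         (\<forall>E. realization n (seq_d n x) E \<longrightarrow>
              \<not> (\<exists>F. k_factor n 2 E F \<and> connected_graph n F))"
proof -
  have "k_factorable n 2 (seq_d n x)"
    using assms by (rule two_factorable_seq_d)
  moreover have "5 \<le> n"
    using assms(1,2) by linarith
  ultimately show ?thesis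
    unfolding graphic_def k_factorable_def using no_connected_two_factor by blast
qed

end
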